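(* Let $k\ge 2$ and let $G$ be a $\Gamma_{\times k,t}$-external graph with $\delta(G)\ge k$. Then for every graph $H$ with $\delta(H)\ge k$, \[ \Gamma_{\times k,t}(G\,\Box\,H)\ge\Gamma_{\times k,t}(G)\cdot\Gamma_{\times k,t}(H). \]
   Context: A set $S\subseteq V(G)$ is a $k$-tuple total dominating set ($k$TDS) of a graph $G$ with $\delta(G)\ge k$ if $|N_G(x)\cap S|\ge k$ for every $x\in V(G)$. The upper $k$-tuple total domination number $\Gamma_{\times k,t}(G)$ is the maximum cardinality of a minimal (with respect to inclusion) $k$TDS of $G$; a minimal $k$TDS of this cardinality is a $\Gamma_{\times k,t}$-set. For $v\in S$, a vertex $v'$ is a $k$-open private neighbor of $v$ with respect to $S$ if $v\in N_G(v')$ and $|N_G(v')\cap S|=k$; it is external if $v'\notin S$. A graph $G$ is $\Gamma_{\times k,t}$-external if it has a $\Gamma_{\times k,t}$-set $S$ such that every vertex of $S$ has an external $k$-open private neighbor with respect to $S$. The Cartesian product $G\,\Box\,H$ has vertex set $V(G)\times V(H)$, with $(g_1,h_1)\sim(g_2,h_2)$ iff either $g_1=g_2$ and $h_1h_2\in E(H)$, or $h_1=h_2$ and $g_1g_2\in E(G)$. *)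

theory Defs
  imports Main
begin

definition simple_graph :: "'a set \<Rightarrow> ('a \<Rightarrow> 'a \<Rightarrow> bool) \<Rightarrow> bool" where
  "simple_graph V E \<longleftrightarrow> finite V \<and> (\<forall>x y. E x y \<longrightarrow> x \<in> V \<and> y \<in> V)
     \<and> (\<forall>x y. E x y \<longrightarrow> E y x) \<and> (\<forall>x. \<not> E x x)"

definition nbhd :: "'a set \<Rightarrow> ('a \<Rightarrow> 'a \<Rightarrow> bool) \<Rightarrow> 'a \<Rightarrow> 'a set" where
  "nbhd V E x = {y \<in> V. E x y}"

definition min_degree_ge :: "'a set \<Rightarrow> ('a \<Rightarrow> 'a \<Rightarrow> bool) \<Rightarrow> nat \<Rightarrow> bool" where
  "min_degree_ge V E k \<longleftrightarrow> (\<forall>x\<in>V. k \<le> card (nbhd V E x))"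

definition is_kTDS :: "'a set \<Rightarrow> ('a \<Rightarrow> 'a \<Rightarrow> bool) \<Rightarrow> nat \<Rightarrow> 'a set \<Rightarrow> bool" where
  "is_kTDS V E k S \<longleftrightarrow> S \<subseteq> V \<and> (\<forall>x\<in>V. k \<le> card (nbhd V E x \<inter> S))"

definition minimal_kTDS :: "'a set \<Rightarrow> ('a \<Rightarrow> 'a \<Rightarrow> bool) \<Rightarrow> nat \<Rightarrow> 'a set \<Rightarrow> bool" where
  "minimal_kTDS V E k S \<longleftrightarrow> is_kTDS V E k S \<and> (\<forall>T. T \<subset> S \<longrightarrow> \<not> is_kTDS V E k T)"

definition upper_ktdn :: "'a set \<Rightarrow> ('a \<Rightarrow> 'a \<Rightarrow> bool) \<Rightarrow> nat \<Rightarrow> nat" where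
  "upper_ktdn V E k = Max {card S | S. minimal_kTDS V E k S}"

definition Gamma_kt_set :: "'a set \<Rightarrow> ('a \<Rightarrow> 'a \<Rightarrow> bool) \<Rightarrow> nat \<Rightarrow> 'a set \<Rightarrow> bool" where
  "Gamma_kt_set V E k S \<longleftrightarrow> minimal_kTDS V E k S \<and> card S = upper_ktdn V E k"

definition k_open_private_nbr ::
  "'a set \<Rightarrow> ('a \<Rightarrow> 'a \<Rightarrow> bool) \<Rightarrow> nat \<Rightarrow> 'a set \<Rightarrow> 'a \<Rightarrow> 'a \<Rightarrow> bool" where
  "k_open_private_nbr V E k S v v' \<longleftrightarrow>
     v' \<in> V \<and> v \<in> nbhd V E v' \<and> card (nbhd V E v' \<inter> S) = k"

definition Gamma_kt_external :: "'a set \<Rightarrow> ('a \<Rightarrow> 'a \<Rightarrow> bool) \<Rightarrow> nat \<Rightarrow> bool" where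
  "Gamma_kt_external V E k \<longleftrightarrow> (\<exists>S. Gamma_kt_set V E k S \<and>
     (\<forall>v\<in>S. \<exists>v'. v' \<notin> S \<and> k_open_private_nbr V E k S v v'))"

definition cart_edges :: "('a \<Rightarrow> 'a \<Rightarrow> bool) \<Rightarrow> ('b \<Rightarrow> 'b \<Rightarrow> bool) \<Rightarrow> ('a \<times> 'b) \<Rightarrow> ('a \<times> 'b) \<Rightarrow> bool" where
  "cart_edges EG EH p q \<longleftrightarrow>
     (fst p = fst q \<and> EH (snd p) (snd q)) \<or> (snd p = snd q \<and> EG (fst p) (fst q))"

end

theory Submission
  imports Defs
begin

text \<open>If S is a \<Gamma>-set of G in which every vertex v has an external k-open private
neighbour v', then S \<times> V(H) is a minimal kTDS of G \<box> H: every vertex (g, h) sees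
S \<times> V(H) at least through its G-layer, and (v', h) sees it only through its G-layer
(its H-neighbours (v', y) lie outside S \<times> V(H)), so (v', h) is a k-open private
neighbour of (v, h); a kTDS all of whose vertices have k-open private
neighbours is minimal. Hence \<Gamma>(G \<box> H) \<ge> |S| |V(H)| = \<Gamma>(G) |V(H)| \<ge> \<Gamma>(G) \<Gamma>(H).\<close>

lemma minimal_kTDS_subset:
  "minimal_kTDS V E k S \<Longrightarrow> S \<subseteq> V"
  unfolding minimal_kTDS_def is_kTDS_def by blast

lemma is_kTDS_vertex_set:
  "min_degree_ge V E k \<Longrightarrow> is_kTDS V E k V"
  unfolding min_degree_ge_def is_kTDS_def nbhd_def by (auto simp: Int_absorb2)

lemma minimal_kTDS_exists:
  assumes "finite V" and "min_degree_ge V E k"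
  obtains S where "minimal_kTDS V E k S"
proof -
  obtain S where S: "is_kTDS V E k S" and least: "\<And>T. is_kTDS V E k T \<Longrightarrow> card S \<le> card T"
    using ex_has_least_nat[of "is_kTDS V E k" V card] is_kTDS_vertex_set[OF assms(2)] by blast
  have "finite S"
    using S assms(1) unfolding is_kTDS_def by (blast intro: finite_subset)
  then have "minimal_kTDS V E k S"
    using S least unfolding minimal_kTDS_def by (meson leD psubset_card_mono)
  then show thesis by (rule that)
qed

lemma finite_minimal_kTDS_cards:
  assumes "finite V"
  shows "finite {card S | S. minimal_kTDS V E k S}"
proof (rule finite_subset)
  show "{card S | S. minimal_kTDS V E k S} \<subseteq> {..card V}"
    using assms by (auto dest: minimal_kTDS_subset intro: card_mono)
qed simp

lemma card_le_upper_ktdn: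
  "finite V \<Longrightarrow> minimal_kTDS V E k S \<Longrightarrow> card S \<le> upper_ktdn V E k"
  unfolding upper_ktdn_def by (rule Max_ge) (auto intro: finite_minimal_kTDS_cards)

lemma upper_ktdn_le_card:
  assumes "finite V" and "min_degree_ge V E k"
  shows "upper_ktdn V E k \<le> card V"
proof -
  obtain S where "minimal_kTDS V E k S"
    using minimal_kTDS_exists[OF assms] .
  then show ?thesis
    unfolding upper_ktdn_def using assms(1)
    by (subst Max_le_iff) (auto intro: finite_minimal_kTDS_cards card_mono dest: minimal_kTDS_subset)
qed

lemma minimal_kTDS_if_private_nbrs:
  assumes "finite V" and kTDS: "is_kTDS V E k S"
    and private_nbrs: "\<And>v. v \<in> S \<Longrightarrow> \<exists>v'. k_open_private_nbr V E k S v v'"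
  shows "minimal_kTDS V E k S"
  unfolding minimal_kTDS_def
proof (intro conjI allI impI kTDS)
  fix T assume "T \<subset> S"
  then obtain v where v: "v \<in> S" "v \<notin> T" by blast
  then obtain v' where v'V: "v' \<in> V" and v_nbr: "v \<in> nbhd V E v'"
      and card_k: "card (nbhd V E v' \<inter> S) = k"
    using private_nbrs unfolding k_open_private_nbr_def by blast
  have fin: "finite (nbhd V E v' \<inter> S)"
    using \<open>finite V\<close> unfolding nbhd_def by simp
  have "card (nbhd V E v' \<inter> T) \<le> card (nbhd V E v' \<inter> S - {v})"
    using \<open>T \<subset> S\<close> v fin by (intro card_mono) auto
  also have "\<dots> < k"
    using card_Diff1_less[OF fin] card_k v v_nbr by blast
  finally show "\<not> is_kTDS V E k T"
    using v'V unfolding is_kTDS_def by (meson leD)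
qed

lemma nbhd_cart_edges_inter_layer:
  assumes "g \<notin> S" and "h \<in> VH"
  shows "nbhd (VG \<times> VH) (cart_edges EG EH) (g, h) \<inter> (S \<times> VH)
           = (\<lambda>x. (x, h)) ` (nbhd VG EG g \<inter> S)"
  using assms unfolding nbhd_def cart_edges_def by auto

lemma is_kTDS_cart_layer:
  assumes "is_kTDS VG EG k S" and "finite VG" and "finite VH"
  shows "is_kTDS (VG \<times> VH) (cart_edges EG EH) k (S \<times> VH)"
  unfolding is_kTDS_def
proof (intro conjI ballI)
  show "S \<times> VH \<subseteq> VG \<times> VH"
    using assms(1) unfolding is_kTDS_def by blast
next
  fix p assume "p \<in> VG \<times> VH"
  then obtain g h where p: "p = (g, h)" "g \<in> VG" "h \<in> VH" by blast
  have "k \<le> card (nbhd VG EG g \<inter> S)"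
    using assms(1) p unfolding is_kTDS_def by blast
  also have "\<dots> = card ((\<lambda>x. (x, h)) ` (nbhd VG EG g \<inter> S))"
    by (rule card_image[symmetric]) (auto simp: inj_on_def)
  also have "\<dots> \<le> card (nbhd (VG \<times> VH) (cart_edges EG EH) p \<inter> (S \<times> VH))"
    using p assms(2,3) unfolding nbhd_def cart_edges_def by (intro card_mono) auto
  finally show "k \<le> card (nbhd (VG \<times> VH) (cart_edges EG EH) p \<inter> (S \<times> VH))" .
qed

lemma k_open_private_nbr_cart_layer:
  assumes "v' \<notin> S" and "k_open_private_nbr VG EG k S v v'" and "h \<in> VH"
  shows "k_open_private_nbr (VG \<times> VH) (cart_edges EG EH) k (S \<times> VH) (v, h) (v', h)"
proof -
  have "card (nbhd (VG \<times> VH) (cart_edges EG EH) (v', h) \<inter> (S \<times> VH))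
          = card (nbhd VG EG v' \<inter> S)"
    unfolding nbhd_cart_edges_inter_layer[OF assms(1,3)]
    by (rule card_image) (auto simp: inj_on_def)
  then show ?thesis
    using assms unfolding k_open_private_nbr_def nbhd_def cart_edges_def by auto
qed

lemma minimal_kTDS_cart_layer:
  assumes "is_kTDS VG EG k S" and "finite VG" and "finite VH"
    and "\<And>v. v \<in> S \<Longrightarrow> \<exists>v'. v' \<notin> S \<and> k_open_private_nbr VG EG k S v v'"
  shows "minimal_kTDS (VG \<times> VH) (cart_edges EG EH) k (S \<times> VH)"
  using assms
  by (intro minimal_kTDS_if_private_nbrs is_kTDS_cart_layer)
     (blast intro: k_open_private_nbr_cart_layer)+

theorem mainTheorem11:
  fixes VG :: "'a set" and EG :: "'a \<Rightarrow> 'a \<Rightarrow> bool"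
    and VH :: "'b set" and EH :: "'b \<Rightarrow> 'b \<Rightarrow> bool" and k :: nat
  assumes "2 \<le> k"
    and "simple_graph VG EG" and "min_degree_ge VG EG k" and "Gamma_kt_external VG EG k"
    and "simple_graph VH EH" and "min_degree_ge VH EH k"
  shows "upper_ktdn (VG \<times> VH) (cart_edges EG EH) k \<ge> upper_ktdn VG EG k * upper_ktdn VH EH k"
proof -
  have finG: "finite VG" and finH: "finite VH"
    using assms(2,5) unfolding simple_graph_def by auto
  obtain S where S: "Gamma_kt_set VG EG k S"
    and ext: "\<forall>v\<in>S. \<exists>v'. v' \<notin> S \<and> k_open_private_nbr VG EG k S v v'"
    using assms(4) unfolding Gamma_kt_external_def by blast
  have "is_kTDS VG EG k S" and card_S: "card S = upper_ktdn VG EG k"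
    using S unfolding Gamma_kt_set_def minimal_kTDS_def by auto
  then have "minimal_kTDS (VG \<times> VH) (cart_edges EG EH) k (S \<times> VH)"
    using finG finH ext by (intro minimal_kTDS_cart_layer) auto
  then have "card (S \<times> VH) \<le> upper_ktdn (VG \<times> VH) (cart_edges EG EH) k"
    using finG finH by (intro card_le_upper_ktdn) simp_all
  moreover have "upper_ktdn VH EH k \<le> card VH"
    using finH assms(6) by (rule upper_ktdn_le_card)
  ultimately show ?thesis
    unfolding card_cartesian_product card_S by (meson le_trans mult_le_mono2)
qed

end
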